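(* Let $n>2k$, $k\ge t+3$, and let $\mathcal F\subseteq\binom{[n]}{k}$ be a maximal $t$-intersecting family with $\tau_t(\mathcal F)=t+2$ and $\tau_t(\mathcal T_t(\mathcal F))=t+1$. Suppose there exist $U_0\in\mathcal U_t(\mathcal F)$ and $F_0\in\mathcal F$ with $|U_0\cap F_0|=t-1$ such that $\mathcal T_t(\mathcal F)\not\subseteq\binom{U_0\cup F_0}{t+2}$. Then $$|\mathcal T_t(\mathcal F)|<\max\left\{(k-t)(k-t+1)+1,\ (t+2)(k-t)+1,\ \binom{t+4}{2}\right\}.$$
   Context: A family is $t$-intersecting if any two members meet in at least $t$ elements. A $t$-cover of a family $\mathcal G$ of subsets of $[n]$ is a set $S\subseteq[n]$ with $|S\cap G|\ge t$ for all $G\in\mathcal G$; $\tau_t(\mathcal G)$ is the minimum size of a $t$-cover, and $\mathcal T_t(\mathcal G)$ is the set of all $t$-covers of $\mathcal G$ of size $\tau_t(\mathcal G)$. $\mathcal U_t(\mathcal F)=\mathcal T_t(\mathcal T_t(\mathcal F))$ is the family of all minimum-size $t$-covers of $\mathcal T_t(\mathcal F)$. A $t$-intersecting $\mathcal F\subseteq\binom{[n]}{k}$ is maximal if no $t$-intersecting subfamily of $\binom{[n]}{k}$ properly contains it. *)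

theory Defs
  imports Main
begin

definition k_subsets :: "nat set \<Rightarrow> nat \<Rightarrow> nat set set" where
  "k_subsets X k = {A. A \<subseteq> X \<and> card A = k}"

definition t_intersecting :: "nat \<Rightarrow> nat set set \<Rightarrow> bool" where
  "t_intersecting t F \<longleftrightarrow> (\<forall>A\<in>F. \<forall>B\<in>F. t \<le> card (A \<inter> B))"

definition is_tcover :: "nat \<Rightarrow> nat \<Rightarrow> nat set set \<Rightarrow> nat set \<Rightarrow> bool" where
  "is_tcover n t G S \<longleftrightarrow> S \<subseteq> {1..n} \<and> (\<forall>A\<in>G. t \<le> card (S \<inter> A))"

definition tau :: "nat \<Rightarrow> nat \<Rightarrow> nat set set \<Rightarrow> nat" where
  "tau n t G = (LEAST m. \<exists>S. is_tcover n t G S \<and> card S = m)"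

definition Tcov :: "nat \<Rightarrow> nat \<Rightarrow> nat set set \<Rightarrow> nat set set" where
  "Tcov n t G = {S. is_tcover n t G S \<and> card S = tau n t G}"

definition Ucov :: "nat \<Rightarrow> nat \<Rightarrow> nat set set \<Rightarrow> nat set set" where
  "Ucov n t F = Tcov n t (Tcov n t F)"

definition maximal_t_intersecting :: "nat \<Rightarrow> nat \<Rightarrow> nat \<Rightarrow> nat set set \<Rightarrow> bool" where
  "maximal_t_intersecting n k t F \<longleftrightarrow>
     F \<subseteq> k_subsets {1..n} k \<and> t_intersecting t F \<and>
     (\<forall>G. G \<subseteq> k_subsets {1..n} k \<and> t_intersecting t G \<and> F \<subseteq> G \<longrightarrow> G = F)"

end

(*
  Write W = U0 \<inter> F0, so that U0 = W \<union> {a, b}. Since U0 is a t-cover of T_t(F) with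
  t + 1 points, every member of T_t(F) contains U0 or misses exactly one point of it, and
  T_t(F) is t-intersecting because F is maximal and n > 2k. This forces the member T1 of
  T_t(F) leaving U0 \<union> F0 to be W \<union> {a, x1, y1} with x1 \<in> F0.

  Covers containing U0 add one point of F0 (at most k - t + 1 of them); covers missing
  w \<in> W add x1 and one point of F0 (at most k - t each). Covers missing a or b add a pair
  outside U0; these two graphs are cross-intersecting with maximum degree at most k - t + 1,
  which bounds them together by 2(k - t + 1). If the covers missing points of W use at most
  one point of F0 besides x1, this gives 3(k - t) + t + 2. Otherwise two such points z1, z2
  force x1 into the covers missing a, and into those missing b unless it is
  (U0 - {b}) \<union> {z1, z2}. A member G of F meeting (U0 - {b}) \<union> {x1} in t - 1 points then
  controls every class, and the bounds 2(k - t) + 2t + 3, 3(k - t) + 3 and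
  (t + 2)(k - t) + 3 - t all lie below the stated maximum.
*)

theory Submission
  imports Defs
begin

lemma card_Int_insert_of_bool:
  "finite S \<Longrightarrow> x \<notin> S \<Longrightarrow> card (G \<inter> insert x S) = of_bool (x \<in> G) + card (G \<inter> S)"
  by (cases "x \<in> G") (simp_all add: Int_insert_right)

lemma less_max_bound_if_case_bound:
  fixes m t X :: nat
  assumes m: "3 \<le> m" and t: "1 \<le> t"
    and X: "X \<le> 3 * m + t + 2 \<or>
      (2 \<le> t \<and> (X \<le> 2 * m + 2 * t + 3 \<or> X \<le> 3 * m + 3 \<or> X + t \<le> (t + 2) * m + 3))"
  shows "X < max (m * (m + 1) + 1) (max ((t + 2) * m + 1) ((t + 4) choose 2))"
proof -
  have mm: "3 * m \<le> m * m" using m by simp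
  have e1: "m * (m + 1) + 1 = m * m + m + 1" by (simp add: algebra_simps)
  have e2: "(t + 2) * m + 1 = t * m + 2 * m + 1" by (simp add: algebra_simps)
  consider "t = 1" | "t = 2" "m = 3" | "t = 2" "4 \<le> m" | "3 \<le> t" using m t by linarith
  then show ?thesis
  proof cases
    case 1
    then have "X \<le> 3 * m + 3" using X by auto
    then have "X < m * (m + 1) + 1" using mm e1 m by linarith
    then show ?thesis by simp
  next
    case 2
    have "(6::nat) choose 2 = 15" by (simp add: choose_two)
    then have "X < (t + 4) choose 2" using X 2 by auto
    then show ?thesis by simp
  next
    case 3
    have "X \<le> 4 * m + 1" using X 3 by auto
    moreover have "4 * m \<le> m * m" using 3 by simp
    ultimately have "X < m * (m + 1) + 1" using e1 3 by linarith
    then show ?thesis by simp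
  next
    case 4
    have "3 * t \<le> t * m" "3 * m \<le> t * m" using 4 m by (simp_all add: mult_le_mono)
    then have "X < (t + 2) * m + 1" using X e2 4 by linarith
    then show ?thesis by simp
  qed
qed

section \<open>Cross-intersecting families of 2-sets\<close>

definition edges_at :: "'a set set \<Rightarrow> 'a \<Rightarrow> 'a set set" where
  "edges_at E v = {e \<in> E. v \<in> e}"

lemma finite_edges_at: "finite E \<Longrightarrow> finite (edges_at E v)"
  by (simp add: edges_at_def)

lemma card_2_eqI: "card e = 2 \<Longrightarrow> u \<in> e \<Longrightarrow> v \<in> e \<Longrightarrow> u \<noteq> v \<Longrightarrow> e = {u, v}"
  by (auto simp: card_2_iff)

lemma card_2_obtain_other:
  assumes "card e = 2" "p \<in> e"
  obtains q where "q \<noteq> p" "e = {p, q}"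
proof -
  obtain x y where "x \<noteq> y" "e = {x, y}" using assms(1) by (auto simp: card_2_iff)
  then show ?thesis using assms(2) that by (metis insert_commute insertE singletonD)
qed

lemma obtain_two_distinct:
  assumes "2 \<le> card A"
  obtains x y where "x \<in> A" "y \<in> A" "x \<noteq> y"
proof -
  obtain x B where "A = insert x B" "x \<notin> B" "1 \<le> card B"
    using assms card_le_Suc_iff[of 1 A] by auto
  moreover obtain y where "y \<in> B" using calculation(3) by fastforce
  ultimately show ?thesis using that by blast
qed

lemma two_edges_common_vertex:
  assumes "card e1 = 2" "card e2 = 2" "e1 \<noteq> e2" "c \<in> e1" "c \<in> e2"
  obtains u v where "e1 = {c, u}" "e2 = {c, v}" "u \<noteq> v" "u \<noteq> c" "v \<noteq> c"
proof -
  obtain u where u: "u \<noteq> c" "e1 = {c, u}" using assms(1,4) by (rule card_2_obtain_other)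
  obtain v where v: "v \<noteq> c" "e2 = {c, v}" using assms(2,5) by (rule card_2_obtain_other)
  have "u \<noteq> v" using u v assms(3) by auto
  with u v show ?thesis using that by blast
qed

lemma edge_eq_if_meets_adjacent:
  assumes "card e = 2" "c \<notin> e" "e \<inter> {c, u} \<noteq> {}" "e \<inter> {c, v} \<noteq> {}" "u \<noteq> v"
  shows "e = {u, v}"
proof (rule card_2_eqI)
  show "u \<in> e" "v \<in> e" using assms(2-4) by auto
qed (use assms in auto)

lemma edge_at_vertex_meeting:
  assumes "card e = 2" "c \<in> e" "e \<inter> {u, v} \<noteq> {}" "u \<noteq> c" "v \<noteq> c"
  shows "e \<in> {{c, u}, {c, v}}"
proof -
  obtain w where "w \<in> e" "w \<in> {u, v}" using assms(3) by blast
  moreover have "w \<noteq> c" using calculation assms(4,5) by auto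
  ultimately have "e = {c, w}" "w \<in> {u, v}" using card_2_eqI[OF assms(1,2)] by auto
  then show ?thesis by auto
qed

lemma edge_meeting_triangle:
  assumes "card e = 2" "e \<inter> {c, u} \<noteq> {}" "e \<inter> {c, v} \<noteq> {}" "e \<inter> {u, v} \<noteq> {}"
    and "u \<noteq> v" "u \<noteq> c" "v \<noteq> c"
  shows "e \<in> {{c, u}, {c, v}, {u, v}}"
proof (cases "c \<in> e")
  case True
  then show ?thesis using edge_at_vertex_meeting[OF assms(1) True assms(4,6,7)] by blast
next
  case False
  then show ?thesis using edge_eq_if_meets_adjacent[OF assms(1) False assms(2,3,5)] by blast
qed

lemma edges_meeting_adjacent_subset:
  assumes "\<forall>e\<in>A. card e = 2" "\<forall>e\<in>A. e \<inter> {c, u} \<noteq> {} \<and> e \<inter> {c, v} \<noteq> {}" "u \<noteq> v"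
  shows "A \<subseteq> edges_at A c \<union> {{u, v}}"
  using edge_eq_if_meets_adjacent[of _ c u v] assms by (auto simp: edges_at_def)

lemma card_edges_meeting_adjacent:
  assumes "finite A" "\<forall>e\<in>A. card e = 2"
    and "\<forall>e\<in>A. e \<inter> {c, u} \<noteq> {} \<and> e \<inter> {c, v} \<noteq> {}" "u \<noteq> v"
  shows "card A \<le> card (edges_at A c) + 1"
proof -
  have "card A \<le> card (edges_at A c \<union> {{u, v}})"
    using edges_meeting_adjacent_subset[OF assms(2-4)] assms(1)
    by (intro card_mono) (auto simp: finite_edges_at)
  also have "\<dots> \<le> card (edges_at A c) + 1"
    using card_Un_le[of "edges_at A c" "{{u, v}}"] by simp
  finally show ?thesis .
qed

lemma card_edges_meeting_disjoint:
  assumes "\<forall>e\<in>A. card e = 2" "card f1 = 2" "card f2 = 2" "f1 \<inter> f2 = {}"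
    and "\<forall>e\<in>A. e \<inter> f1 \<noteq> {} \<and> e \<inter> f2 \<noteq> {}"
  shows "card A \<le> 4"
proof -
  have "A \<subseteq> (\<lambda>(x, y). {x, y}) ` (f1 \<times> f2)"
  proof
    fix e assume e: "e \<in> A"
    obtain x y where "x \<in> e" "x \<in> f1" "y \<in> e" "y \<in> f2" using assms(5) e by blast
    moreover have "x \<noteq> y" using calculation assms(4) by auto
    ultimately show "e \<in> (\<lambda>(x, y). {x, y}) ` (f1 \<times> f2)"
      using card_2_eqI assms(1) e by fastforce
  qed
  moreover have "finite (f1 \<times> f2)"
    using assms(2,3) by (metis card.infinite finite_cartesian_product zero_neq_numeral)
  ultimately have "card A \<le> card (f1 \<times> f2)"
    by (meson card_image_le card_mono finite_imageI order_trans)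
  then show ?thesis using assms(2,3) by (simp add: card_cartesian_product)
qed

lemma card_edges_meeting_two:
  assumes "finite A" "\<forall>e\<in>A. card e = 2" "card f1 = 2" "card f2 = 2" "f1 \<noteq> f2"
    and "\<forall>e\<in>A. e \<inter> f1 \<noteq> {} \<and> e \<inter> f2 \<noteq> {}"
    and "\<forall>v. card (edges_at A v) \<le> D" "3 \<le> D"
  shows "card A \<le> D + 1"
proof (cases "f1 \<inter> f2 = {}")
  case True
  then show ?thesis using card_edges_meeting_disjoint[OF assms(2-4) True assms(6)] assms(8) by linarith
next
  case False
  then obtain c where "c \<in> f1" "c \<in> f2" by auto
  then obtain u v where "f1 = {c, u}" "f2 = {c, v}" "u \<noteq> v"
    using two_edges_common_vertex[OF assms(3-5)] by blast
  then have "card A \<le> card (edges_at A c) + 1"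
    using card_edges_meeting_adjacent[of A c u v] assms(1,2,6) by blast
  then show ?thesis using assms(7) by (metis add_le_mono1 order_trans)
qed

lemma card_edges_meeting_edge:
  assumes "finite A" "\<forall>e\<in>A. card e = 2" "card f = 2" "\<forall>e\<in>A. e \<inter> f \<noteq> {}"
    and "\<forall>v. card (edges_at A v) \<le> D"
    and "f \<notin> A \<Longrightarrow> \<forall>p\<in>f. card (edges_at A p) < D"
  shows "card A + 1 \<le> 2 * D"
proof -
  obtain p q where pq: "p \<noteq> q" "f = {p, q}" using assms(3) by (auto simp: card_2_iff)
  let ?P = "edges_at A p" and ?Q = "edges_at A q"
  have fin: "finite ?P" "finite ?Q" using assms(1) by (auto simp: finite_edges_at)
  have "A \<subseteq> ?P \<union> ?Q" using assms(4) pq by (auto simp: edges_at_def)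
  then have "card A \<le> card (?P \<union> ?Q)" using fin by (intro card_mono) auto
  moreover have "card (?P \<union> ?Q) + card (?P \<inter> ?Q) = card ?P + card ?Q"
    using card_Un_Int[OF fin] by simp
  moreover have "1 \<le> card (?P \<inter> ?Q)" if "f \<in> A"
  proof -
    have "f \<in> ?P \<inter> ?Q" using that pq by (auto simp: edges_at_def)
    then show ?thesis using fin by (metis One_nat_def Suc_leI card_gt_0_iff empty_iff finite_Int)
  qed
  moreover have "card ?P \<le> D" "card ?Q \<le> D" using assms(5) by auto
  moreover have "f \<notin> A \<Longrightarrow> card ?P < D \<and> card ?Q < D" using assms(6) pq by auto
  ultimately show ?thesis by (cases "f \<in> A") linarith+
qed

lemma card_cross_intersecting_star:
  assumes finB: "finite B" and eA: "\<forall>e\<in>A. card e = 2" and eB: "\<forall>e\<in>B. card e = 2"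
    and cross: "\<forall>e\<in>A. \<forall>f\<in>B. e \<inter> f \<noteq> {}"
    and degA: "\<forall>v. card (edges_at A v) \<le> D" and degB: "\<forall>v. card (edges_at B v) \<le> D"
    and D: "3 \<le> D" and star: "\<forall>e\<in>A. c \<in> e" and uv: "{c, u} \<in> A" "{c, v} \<in> A" "u \<noteq> v" "u \<noteq> c" "v \<noteq> c"
  shows "card A + card B \<le> 2 * D"
proof -
  have crossB: "\<forall>f\<in>B. f \<inter> {c, u} \<noteq> {} \<and> f \<inter> {c, v} \<noteq> {}"
    using cross uv by (auto simp: Int_commute)
  have "A = edges_at A c" using star by (auto simp: edges_at_def)
  then have A: "card A \<le> D" using degA[rule_format, of c] by simp
  show ?thesis
  proof (cases "{u, v} \<in> B")
    case True
    have "A \<subseteq> {{c, u}, {c, v}}"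
    proof
      fix e assume "e \<in> A"
      then show "e \<in> {{c, u}, {c, v}}"
        using edge_at_vertex_meeting[of e c u v] eA star cross True uv(4,5) by blast
    qed
    then have "card A \<le> card {{c, u}, {c, v}}" by (intro card_mono) auto
    also have "\<dots> \<le> 2" by (simp add: card_insert_if)
    finally show ?thesis
      using card_edges_meeting_adjacent[OF finB eB crossB uv(3)] degB[rule_format, of c] D by linarith
  next
    case False
    then have "B \<subseteq> edges_at B c" using edges_meeting_adjacent_subset[OF eB crossB uv(3)] by blast
    then have "card B \<le> card (edges_at B c)" using finB by (simp add: card_mono finite_edges_at)
    then show ?thesis using A degB[rule_format, of c] by linarith
  qed
qed

lemma card_cross_intersecting_triangle:
  assumes finA: "finite A" and eA: "\<forall>e\<in>A. card e = 2" and eB: "\<forall>e\<in>B. card e = 2"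
    and cross: "\<forall>e\<in>A. \<forall>f\<in>B. e \<inter> f \<noteq> {}" and degA: "\<forall>v. card (edges_at A v) \<le> D"
    and D: "4 \<le> D" and B2: "2 \<le> card B"
    and uv: "{c, u} \<in> A" "{c, v} \<in> A" "{u, v} \<in> A" "u \<noteq> v" "u \<noteq> c" "v \<noteq> c"
  shows "card A + card B \<le> 2 * D"
proof -
  have "B \<subseteq> {{c, u}, {c, v}, {u, v}}"
  proof
    fix f assume "f \<in> B"
    then show "f \<in> {{c, u}, {c, v}, {u, v}}"
      using edge_meeting_triangle[OF _ _ _ _ uv(4-6)] eB cross uv(1-3) by (metis Int_commute)
  qed
  then have "card B \<le> card {{c, u}, {c, v}, {u, v}}" by (intro card_mono) auto
  also have "\<dots> \<le> 3" by (simp add: card_insert_if)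
  finally have B3: "card B \<le> 3" .
  obtain f1 f2 where f12: "f1 \<in> B" "f2 \<in> B" "f1 \<noteq> f2" using B2 by (rule obtain_two_distinct)
  have "card A \<le> D + 1"
  proof (rule card_edges_meeting_two[OF finA eA _ _ f12(3) _ degA])
    show "card f1 = 2" "card f2 = 2" using eB f12 by auto
    show "\<forall>e\<in>A. e \<inter> f1 \<noteq> {} \<and> e \<inter> f2 \<noteq> {}" using cross f12 by blast
  qed (use D in simp)
  then show ?thesis using B3 D by linarith
qed

text \<open>Two edges of A share a vertex c; either all of A passes through c, or A contains the
  triangle on these two edges.\<close>
lemma card_cross_intersecting_if_intersecting:
  assumes finA: "finite A" and finB: "finite B"
    and eA: "\<forall>e\<in>A. card e = 2" and eB: "\<forall>e\<in>B. card e = 2"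
    and cross: "\<forall>e\<in>A. \<forall>f\<in>B. e \<inter> f \<noteq> {}"
    and degA: "\<forall>v. card (edges_at A v) \<le> D" and degB: "\<forall>v. card (edges_at B v) \<le> D"
    and D: "4 \<le> D" and A2: "2 \<le> card A" and B2: "2 \<le> card B"
    and intA: "\<forall>e1\<in>A. \<forall>e2\<in>A. e1 \<inter> e2 \<noteq> {}"
  shows "card A + card B \<le> 2 * D"
proof -
  obtain e1 e2 where e12: "e1 \<in> A" "e2 \<in> A" "e1 \<noteq> e2" using A2 by (rule obtain_two_distinct)
  obtain c where c: "c \<in> e1" "c \<in> e2" using intA e12 by blast
  obtain u v where uv: "e1 = {c, u}" "e2 = {c, v}" "u \<noteq> v" "u \<noteq> c" "v \<noteq> c"
    using two_edges_common_vertex[OF _ _ e12(3) c] eA e12 by auto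
  show ?thesis
  proof (cases "\<forall>e\<in>A. c \<in> e")
    case True
    then show ?thesis
      using card_cross_intersecting_star[OF finB eA eB cross degA degB _ True] D e12 uv by simp
  next
    case False
    then obtain e3 where e3: "e3 \<in> A" "c \<notin> e3" by blast
    have "e3 \<inter> e1 \<noteq> {}" "e3 \<inter> e2 \<noteq> {}" using intA e3(1) e12 by blast+
    then have "e3 = {u, v}" using edge_eq_if_meets_adjacent[OF _ e3(2) _ _ uv(3)] eA e3(1) uv by simp
    then show ?thesis
      using card_cross_intersecting_triangle[OF finA eA eB cross degA D B2] e12 e3 uv by simp
  qed
qed

lemma card_cross_intersecting_if_card_ge_2:
  assumes finA: "finite A" and finB: "finite B"
    and eA: "\<forall>e\<in>A. card e = 2" and eB: "\<forall>e\<in>B. card e = 2"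
    and cross: "\<forall>e\<in>A. \<forall>f\<in>B. e \<inter> f \<noteq> {}"
    and degA: "\<forall>v. card (edges_at A v) \<le> D" and degB: "\<forall>v. card (edges_at B v) \<le> D"
    and D: "4 \<le> D" and A2: "2 \<le> card A" and B2: "2 \<le> card B"
  shows "card A + card B \<le> 2 * D"
proof -
  have cross': "\<forall>f\<in>B. \<forall>e\<in>A. f \<inter> e \<noteq> {}" using cross by (metis inf_commute)
  consider "\<forall>e1\<in>A. \<forall>e2\<in>A. e1 \<inter> e2 \<noteq> {}" | "\<forall>f1\<in>B. \<forall>f2\<in>B. f1 \<inter> f2 \<noteq> {}"
    | e1 e2 f1 f2 where "e1 \<in> A" "e2 \<in> A" "e1 \<inter> e2 = {}" "f1 \<in> B" "f2 \<in> B" "f1 \<inter> f2 = {}"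
    by blast
  then show ?thesis
  proof cases
    case 1
    then show ?thesis
      using card_cross_intersecting_if_intersecting[OF finA finB eA eB cross degA degB D A2 B2] by blast
  next
    case 2
    then show ?thesis
      using card_cross_intersecting_if_intersecting[OF finB finA eB eA cross' degB degA D B2 A2]
      by linarith
  next
    case (3 e1 e2 f1 f2)
    then have "card A \<le> 4" "card B \<le> 4"
      using card_edges_meeting_disjoint[OF eA _ _ \<open>f1 \<inter> f2 = {}\<close>]
        card_edges_meeting_disjoint[OF eB _ _ \<open>e1 \<inter> e2 = {}\<close>] eA eB cross cross' by auto
    then show ?thesis using D by linarith
  qed
qed

lemma card_cross_intersecting_graphs:
  assumes finA: "finite A" and finB: "finite B" and "A \<noteq> {}" "B \<noteq> {}"
    and eA: "\<forall>e\<in>A. card e = 2" and eB: "\<forall>e\<in>B. card e = 2"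
    and cross: "\<forall>e\<in>A. \<forall>f\<in>B. e \<inter> f \<noteq> {}"
    and degA: "\<forall>v. card (edges_at A v) \<le> D" and degB: "\<forall>v. card (edges_at B v) \<le> D"
    and privA: "\<forall>f\<in>B - A. \<forall>p\<in>f. card (edges_at A p) < D"
    and privB: "\<forall>e\<in>A - B. \<forall>p\<in>e. card (edges_at B p) < D"
    and D: "4 \<le> D"
  shows "card A + card B \<le> 2 * D"
proof -
  have "1 \<le> card A" "1 \<le> card B"
    using \<open>A \<noteq> {}\<close> \<open>B \<noteq> {}\<close> finA finB by (simp_all add: Suc_le_eq card_gt_0_iff)
  then consider "card B = 1" | "card A = 1" | "2 \<le> card A" "2 \<le> card B" by linarith
  then show ?thesis
  proof cases
    case 1
    then obtain f where "B = {f}" using card_1_singletonE by blast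
    then have "card A + 1 \<le> 2 * D"
      using card_edges_meeting_edge[OF finA eA _ _ degA] eB cross privA by auto
    then show ?thesis using 1 by simp
  next
    case 2
    then obtain e where "A = {e}" using card_1_singletonE by blast
    then have "card B + 1 \<le> 2 * D"
      using card_edges_meeting_edge[OF finB eB _ _ degB] eA cross privB by (auto simp: Int_commute)
    then show ?thesis using 2 by simp
  next
    case 3
    then show ?thesis
      using card_cross_intersecting_if_card_ge_2[OF finA finB eA eB cross degA degB D] by blast
  qed
qed

section \<open>Minimum t-covers\<close>

lemma tau_le_card: "is_tcover n t G S \<Longrightarrow> tau n t G \<le> card S"
  unfolding tau_def by (rule Least_le) blast

lemma exists_uncovered_if_card_less_tau:
  assumes "S \<subseteq> {1..n}" "card S < tau n t G"
  shows "\<exists>A\<in>G. card (S \<inter> A) < t"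
  using assms tau_le_card[of n t G S] by (force simp: is_tcover_def)

lemma mem_maximal_if_superset_of_cover:
  assumes max: "maximal_t_intersecting n k t F" and "t \<le> k"
    and S: "is_tcover n t F S" and "S \<subseteq> G" "G \<subseteq> {1..n}" "card G = k"
  shows "G \<in> F"
proof -
  have "t \<le> card (G \<inter> H)" if "H \<in> F" for H
  proof -
    have "t \<le> card (S \<inter> H)" using S that by (simp add: is_tcover_def)
    also have "\<dots> \<le> card (G \<inter> H)"
      using \<open>S \<subseteq> G\<close> \<open>G \<subseteq> {1..n}\<close> by (intro card_mono) (auto intro: finite_subset)
    finally show ?thesis .
  qed
  then have "t_intersecting t (insert G F)"
    using max \<open>t \<le> k\<close> \<open>card G = k\<close>
    by (auto simp: t_intersecting_def maximal_t_intersecting_def Int_commute)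
  moreover have "insert G F \<subseteq> k_subsets {1..n} k"
    using max assms(5,6) by (auto simp: maximal_t_intersecting_def k_subsets_def)
  ultimately have "insert G F = F" using max unfolding maximal_t_intersecting_def by blast
  then show ?thesis by blast
qed

text \<open>Two minimum covers T, T' meet inside any k-set extending T away from T', and such
  k-sets belong to the maximal family F.\<close>
lemma t_intersecting_Tcov:
  assumes max: "maximal_t_intersecting n k t F" and "t \<le> k" "tau n t F \<le> k" "2 * k \<le> n"
  shows "t_intersecting t (Tcov n t F)"
  unfolding t_intersecting_def
proof (intro ballI)
  fix T T' assume T: "T \<in> Tcov n t F" and T': "T' \<in> Tcov n t F"
  have cov: "is_tcover n t F T" "is_tcover n t F T'" and card: "card T = tau n t F" "card T' = tau n t F"
    using T T' by (auto simp: Tcov_def)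
  have sub: "T \<subseteq> {1..n}" "T' \<subseteq> {1..n}" using cov by (auto simp: is_tcover_def)
  have fin: "finite T" "finite T'" using sub by (auto intro: finite_subset)
  define R where "R = {1..n} - (T \<union> T')"
  have "card R = n - card (T \<union> T')" unfolding R_def using sub fin by (subst card_Diff_subset) auto
  moreover have "card (T \<union> T') \<le> 2 * tau n t F" using card_Un_le[of T T'] card by simp
  ultimately have "k - card T \<le> card R" using assms(3,4) card by linarith
  then obtain E where E: "E \<subseteq> R" "card E = k - card T" "finite E" by (rule obtain_subset_with_card_n)
  have "T \<inter> E = {}" using E(1) by (auto simp: R_def)
  then have "card (T \<union> E) = k" using card_Un_disjoint[OF fin(1) E(3)] E(2) card assms(3) by simp
  moreover have "T \<union> E \<subseteq> {1..n}" using E(1) sub by (auto simp: R_def)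
  ultimately have "T \<union> E \<in> F" using mem_maximal_if_superset_of_cover[OF max \<open>t \<le> k\<close> cov(1)] by blast
  then have "t \<le> card (T' \<inter> (T \<union> E))" using cov(2) by (simp add: is_tcover_def)
  moreover have "T' \<inter> (T \<union> E) = T \<inter> T'" using E(1) by (auto simp: R_def)
  ultimately show "t \<le> card (T \<inter> T')" by simp
qed

section \<open>Minimum covers relative to U0\<close>

text \<open>TT stands for T_t(F), U0 for a member of U_t(F), and T1 for a member of T_t(F) not
  contained in U0 \<union> F0, as witnessed by y1. The hypotheses tau_t(F) = t + 2 and
  tau_t(T_t(F)) = t + 1 enter only through F_uncovered and TT_uncovered.\<close>

locale cover_setting =
  fixes n k t :: nat and F TT :: "nat set set" and U0 F0 T1 :: "nat set" and y1 :: nat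
  assumes k_ge: "t + 3 \<le> k"
    and card_F: "G \<in> F \<Longrightarrow> card G = k"
    and TT_sub: "T \<in> TT \<Longrightarrow> T \<subseteq> {1..n}"
    and card_TT_mem: "T \<in> TT \<Longrightarrow> card T = t + 2"
    and TT_covers: "T \<in> TT \<Longrightarrow> G \<in> F \<Longrightarrow> t \<le> card (G \<inter> T)"
    and TT_intersecting: "T \<in> TT \<Longrightarrow> T' \<in> TT \<Longrightarrow> t \<le> card (T \<inter> T')"
    and F_uncovered: "Y \<subseteq> {1..n} \<Longrightarrow> card Y = t + 1 \<Longrightarrow> \<exists>G\<in>F. card (G \<inter> Y) < t"
    and TT_uncovered: "X \<subseteq> {1..n} \<Longrightarrow> card X = t \<Longrightarrow> \<exists>T\<in>TT. card (X \<inter> T) < t"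
    and U0_sub: "U0 \<subseteq> {1..n}" and card_U0: "card U0 = t + 1"
    and U0_covers: "T \<in> TT \<Longrightarrow> t \<le> card (U0 \<inter> T)"
    and F0_in: "F0 \<in> F" and card_U0_Int_F0: "card (U0 \<inter> F0) + 1 = t"
    and T1_in: "T1 \<in> TT" and y1_in: "y1 \<in> T1" and y1_notin: "y1 \<notin> U0" "y1 \<notin> F0"
begin

abbreviation W :: "nat set" where
  "W \<equiv> U0 \<inter> F0"

lemma finite_F_mem: "G \<in> F \<Longrightarrow> finite G"
  using card_F k_ge by (intro card_ge_0_finite) simp

lemma finite_TT_mem: "T \<in> TT \<Longrightarrow> finite T"
  by (rule finite_subset[OF TT_sub]) simp_all

lemma finite_TT: "finite TT"
proof (rule finite_subset)
  show "TT \<subseteq> Pow {1..n}" using TT_sub by blast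
qed simp

lemma finite_U0: "finite U0"
  by (rule finite_subset[OF U0_sub]) simp

lemma finite_F0: "finite F0"
  using F0_in by (rule finite_F_mem)

lemma t_ge_1: "1 \<le> t"
  using card_U0_Int_F0 by linarith

lemma card_W: "card W = t - 1"
  using card_U0_Int_F0 by linarith

lemma card_U0_diff_F0: "card (U0 - F0) = 2"
  using card_U0 card_W t_ge_1 finite_U0 by (simp add: card_Diff_subset_Int)

lemma card_F0_diff_U0: "card (F0 - U0) = k - t + 1"
  using card_F[OF F0_in] card_W t_ge_1 k_ge finite_F0 by (simp add: card_Diff_subset_Int Int_commute)

lemma card_U0_minus: "u \<in> U0 \<Longrightarrow> card (U0 - {u}) = t"
  using card_U0 finite_U0 by (simp add: card_Diff_singleton)

lemma not_covering_if_subset: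
  "T \<in> TT \<Longrightarrow> G \<in> F \<Longrightarrow> G \<inter> T \<subseteq> S \<Longrightarrow> finite S \<Longrightarrow> card S < t \<Longrightarrow> False"
  using TT_covers card_mono by (metis leD le_trans)

lemma not_intersecting_if_subset:
  "T \<in> TT \<Longrightarrow> T' \<in> TT \<Longrightarrow> T \<inter> T' \<subseteq> S \<Longrightarrow> finite S \<Longrightarrow> card S < t \<Longrightarrow> False"
  using TT_intersecting card_mono by (metis leD le_trans)

lemma card_Int_ge_if_subset_insert:
  assumes "T \<in> TT" "G \<in> F" "T \<subseteq> insert z S" "finite S"
  shows "t \<le> card (G \<inter> S) + 1"
proof -
  have "t \<le> card (G \<inter> T)" using TT_covers assms(1,2) .
  also have "\<dots> \<le> card (insert z (G \<inter> S))" using assms(3,4) by (intro card_mono) auto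
  also have "\<dots> \<le> card (G \<inter> S) + 1" using assms(4) by (simp add: card_insert_if)
  finally show ?thesis .
qed

lemma mem_if_subset_insert:
  assumes "T \<in> TT" "G \<in> F" "T \<subseteq> insert z S" "finite S" "card (G \<inter> S) < t"
  shows "z \<in> G"
proof (rule ccontr)
  assume "z \<notin> G"
  then have "G \<inter> T \<subseteq> G \<inter> S" using assms(3) by auto
  then show False using not_covering_if_subset assms by blast
qed

lemma obtain_sparse_member:
  assumes "Y \<subseteq> {1..n}" "card Y = t + 1" "insert y Y \<in> TT"
  obtains G where "G \<in> F" "card (G \<inter> Y) = t - 1" "\<And>z. insert z Y \<in> TT \<Longrightarrow> z \<in> G"
proof -
  obtain G where G: "G \<in> F" "card (G \<inter> Y) < t" using F_uncovered assms(1,2) by blast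
  have fin: "finite Y" using assms(2) by (intro card_ge_0_finite) simp
  have "t \<le> card (G \<inter> Y) + 1" using card_Int_ge_if_subset_insert[OF assms(3) G(1) _ fin] by blast
  moreover have "z \<in> G" if "insert z Y \<in> TT" for z
    using mem_if_subset_insert[OF that G(1) _ fin G(2)] by blast
  ultimately have "card (G \<inter> Y) = t - 1" using G(2) by linarith
  then show ?thesis using that G(1) \<open>\<And>z. insert z Y \<in> TT \<Longrightarrow> z \<in> G\<close> by blast
qed

lemma T1_shape:
  obtains a x1 where "a \<in> U0 - F0" "x1 \<in> F0 - U0" "T1 = insert a (insert x1 (insert y1 W))"
proof -
  define R P Q where "R = T1 \<inter> W" and "P = T1 \<inter> (U0 - F0)" and "Q = T1 \<inter> (F0 - U0)"
  have fin: "finite R" "finite P" "finite Q"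
    using finite_TT_mem[OF T1_in] by (auto simp: R_def P_def Q_def)
  have "U0 \<inter> T1 = R \<union> P" "F0 \<inter> T1 = R \<union> Q" by (auto simp: R_def P_def Q_def)
  moreover have "card (R \<union> P) = card R + card P" "card (R \<union> Q) = card R + card Q"
    using fin by (auto simp: R_def P_def Q_def intro!: card_Un_disjoint)
  ultimately have RP: "t \<le> card R + card P" and RQ: "t \<le> card R + card Q"
    using U0_covers[OF T1_in] TT_covers[OF T1_in F0_in] by simp_all
  have sub: "insert y1 (R \<union> P \<union> Q) \<subseteq> T1" using y1_in by (auto simp: R_def P_def Q_def)
  have "card (R \<union> P \<union> Q) = card R + card P + card Q"
    using fin by (subst card_Un_disjoint, auto simp: R_def P_def Q_def intro!: card_Un_disjoint)
  then have card_sub: "card (insert y1 (R \<union> P \<union> Q)) = card R + card P + card Q + 1"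
    using fin y1_notin by (simp add: R_def P_def Q_def)
  moreover have "card (insert y1 (R \<union> P \<union> Q)) \<le> t + 2"
    using card_mono[OF finite_TT_mem[OF T1_in] sub] card_TT_mem[OF T1_in] by simp
  moreover have RW: "R \<subseteq> W" by (auto simp: R_def)
  then have "card R \<le> t - 1" using card_mono[OF _ RW] finite_U0 card_W by simp
  ultimately have "card R = t - 1" "card P = 1" "card Q = 1" using RP RQ t_ge_1 by linarith+
  have "R = W" using card_subset_eq[OF _ RW] finite_U0 \<open>card R = t - 1\<close> card_W by simp
  moreover have "insert y1 (R \<union> P \<union> Q) = T1"
    using card_subset_eq[OF finite_TT_mem[OF T1_in] sub] card_sub card_TT_mem[OF T1_in]
      \<open>card R = t - 1\<close> \<open>card P = 1\<close> \<open>card Q = 1\<close> t_ge_1 by simp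
  moreover obtain a x1 where "P = {a}" "Q = {x1}"
    using \<open>card P = 1\<close> \<open>card Q = 1\<close> by (meson card_1_singletonE)
  ultimately show ?thesis using that by (auto simp: P_def Q_def)
qed

definition TT_sup :: "nat set set" where
  "TT_sup = {T \<in> TT. U0 \<subseteq> T}"

definition TT_miss :: "nat \<Rightarrow> nat set set" where
  "TT_miss u = {T \<in> TT. U0 \<inter> T = U0 - {u}}"

lemma TT_sup_subset: "TT_sup \<subseteq> TT" and TT_miss_subset: "TT_miss u \<subseteq> TT"
  by (auto simp: TT_sup_def TT_miss_def)

lemma TT_cases: "T \<in> TT \<Longrightarrow> T \<in> TT_sup \<or> (\<exists>u\<in>U0. T \<in> TT_miss u)"
proof -
  assume T: "T \<in> TT"
  show ?thesis
  proof (cases "U0 \<subseteq> T")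
    case False
    then obtain u where u: "u \<in> U0" "u \<notin> T" by auto
    then have "U0 \<inter> T \<subseteq> U0 - {u}" by auto
    moreover have "card (U0 - {u}) \<le> card (U0 \<inter> T)" using card_U0_minus[OF u(1)] U0_covers[OF T] by simp
    ultimately have "U0 \<inter> T = U0 - {u}" using card_seteq finite_U0 by blast
    then show ?thesis using u T by (auto simp: TT_miss_def)
  qed (use T in \<open>simp add: TT_sup_def\<close>)
qed

lemma finite_TT_miss: "finite (TT_miss u)"
  using finite_TT by (simp add: TT_miss_def)

lemma TT_miss_eq: "T \<in> TT_miss u \<Longrightarrow> T = (U0 - {u}) \<union> (T - U0)"
  by (auto simp: TT_miss_def)

lemma TT_sup_shape:
  assumes "T \<in> TT_sup"
  obtains z where "z \<in> F0 - U0" "T = insert z U0"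
proof -
  have T: "T \<in> TT" "U0 \<subseteq> T" using assms by (auto simp: TT_sup_def)
  have "card (T - U0) = 1"
    using T card_TT_mem[OF T(1)] card_U0 finite_U0 by (simp add: card_Diff_subset)
  then obtain z where z: "T - U0 = {z}" by (rule card_1_singletonE)
  have "z \<in> F0"
  proof (rule ccontr)
    assume "z \<notin> F0"
    then have "F0 \<inter> T \<subseteq> W" using z by auto
    then show False using not_covering_if_subset[OF T(1) F0_in, of "W"] card_W t_ge_1 finite_U0
      by simp
  qed
  then show ?thesis using that z T(2) by blast
qed

lemma card_TT_sup: "card TT_sup \<le> k - t + 1"
proof -
  have "TT_sup \<subseteq> (\<lambda>z. insert z U0) ` (F0 - U0)" using TT_sup_shape by blast
  then have "card TT_sup \<le> card (F0 - U0)"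
    using finite_F0 by (meson card_image_le card_mono finite_Diff finite_imageI order_trans)
  then show ?thesis using card_F0_diff_U0 by simp
qed

lemma card_TT_miss_diff:
  assumes "u \<in> U0" "T \<in> TT_miss u"
  shows "card (T - U0) = 2"
proof -
  have T: "T \<in> TT" "T \<inter> U0 = U0 - {u}" using assms(2) by (auto simp: TT_miss_def)
  have "card (T - U0) = card T - card (T \<inter> U0)"
    using finite_TT_mem[OF T(1)] by (intro card_Diff_subset_Int) simp
  then show ?thesis using T card_TT_mem card_U0_minus[OF assms(1)] by simp
qed

lemma TT_miss_shape:
  assumes "u \<in> U0" "T \<in> TT_miss u" "v \<in> T" "v \<notin> U0"
  obtains z where "z \<notin> U0" "z \<noteq> v" "T = insert z (insert v (U0 - {u}))"
proof -
  obtain z where "z \<noteq> v" "T - U0 = {v, z}"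
    using card_TT_miss_diff[OF assms(1,2)] assms(3,4) by (metis DiffI card_2_obtain_other)
  then show ?thesis using that TT_miss_eq[OF assms(2)] by blast
qed

lemma TT_miss_shape_insert:
  assumes "u \<in> U0" "T \<in> TT_miss u" "x \<in> T" "x \<notin> U0"
  obtains z where "z \<notin> insert x U0" "T = insert z (insert x U0 - {u})"
proof -
  obtain z where "z \<notin> U0" "z \<noteq> x" "T = insert z (insert x (U0 - {u}))"
    using TT_miss_shape[OF assms] by blast
  moreover have "insert x (U0 - {u}) = insert x U0 - {u}" using assms(1,4) by auto
  ultimately show ?thesis using that by auto
qed

lemma TT_miss_at_subset_image:
  assumes u: "u \<in> U0" and v: "v \<notin> U0" and T0: "T0 \<in> TT_miss u" "v \<in> T0"
  obtains G where "G \<in> F" "card (G \<inter> insert v (U0 - {u})) = t - 1"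
    "{T \<in> TT_miss u. v \<in> T} \<subseteq> (\<lambda>z. insert z (insert v (U0 - {u}))) ` (G - insert v U0)"
proof -
  define Y where "Y = insert v (U0 - {u})"
  obtain z0 where "T0 = insert z0 Y" using TT_miss_shape[OF u T0 v] unfolding Y_def by blast
  moreover have "T0 \<in> TT" using T0(1) by (simp add: TT_miss_def)
  moreover have "card Y = t + 1" using card_U0_minus[OF u] v finite_U0 by (simp add: Y_def)
  ultimately obtain G where G: "G \<in> F" "card (G \<inter> Y) = t - 1" "\<And>z. insert z Y \<in> TT \<Longrightarrow> z \<in> G"
    using obtain_sparse_member[of Y z0] TT_sub by blast
  have "T \<in> (\<lambda>z. insert z Y) ` (G - insert v U0)" if T: "T \<in> TT_miss u" "v \<in> T" for T
  proof -
    obtain z where "z \<notin> U0" "z \<noteq> v" "T = insert z Y"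
      using TT_miss_shape[OF u T v] unfolding Y_def by blast
    moreover have "z \<in> G" using G(3) calculation(3) T(1) by (simp add: TT_miss_def)
    ultimately show ?thesis by blast
  qed
  then show ?thesis using that G(1,2) unfolding Y_def by blast
qed

lemma card_TT_miss_at:
  assumes "u \<in> U0" "v \<notin> U0"
  shows "card {T \<in> TT_miss u. v \<in> T} \<le> k - t + 1"
proof (cases "{T \<in> TT_miss u. v \<in> T} = {}")
  case False
  then obtain T0 where "T0 \<in> TT_miss u" "v \<in> T0" by blast
  then obtain G where G: "G \<in> F" "card (G \<inter> insert v (U0 - {u})) = t - 1"
    and sub: "{T \<in> TT_miss u. v \<in> T} \<subseteq> (\<lambda>z. insert z (insert v (U0 - {u}))) ` (G - insert v U0)"
    using TT_miss_at_subset_image assms by blast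
  have "card {T \<in> TT_miss u. v \<in> T} \<le> card (G - insert v U0)"
    using sub finite_F_mem[OF G(1)] by (meson card_image_le card_mono finite_Diff finite_imageI order_trans)
  also have "\<dots> \<le> card (G - insert v (U0 - {u}))"
    using finite_F_mem[OF G(1)] by (intro card_mono) auto
  also have "\<dots> = k - (t - 1)"
    using G card_F finite_U0 by (simp add: card_Diff_subset_Int)
  finally show ?thesis using t_ge_1 by linarith
next
  case True
  show ?thesis unfolding True by simp
qed

text \<open>One candidate is lost compared with the previous bound: q is never the added point,
  since (U0 - {u}) \<union> {v, q} is not a cover, and covering G by (U0 - {u'}) \<union> {v, q} puts
  u or q into G.\<close>
lemma card_TT_miss_at_if_missing:
  assumes u: "u \<in> U0" and u': "u' \<in> U0" "u' \<noteq> u" and v: "v \<notin> U0"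
    and q: "q \<notin> U0" "q \<noteq> v"
    and in_TT: "(U0 - {u'}) \<union> {v, q} \<in> TT" and notin_TT: "(U0 - {u}) \<union> {v, q} \<notin> TT"
  shows "card {T \<in> TT_miss u. v \<in> T} \<le> k - t"
proof (cases "{T \<in> TT_miss u. v \<in> T} = {}")
  case False
  define Y where "Y = insert v (U0 - {u})"
  obtain T0 where "T0 \<in> TT_miss u" "v \<in> T0" using False by blast
  then obtain G where G: "G \<in> F" "card (G \<inter> Y) = t - 1"
    and sub: "{T \<in> TT_miss u. v \<in> T} \<subseteq> (\<lambda>z. insert z Y) ` (G - insert v U0)"
    using TT_miss_at_subset_image u v unfolding Y_def by blast
  have fin: "finite G" "finite Y" using finite_F_mem[OF G(1)] finite_U0 by (auto simp: Y_def)
  have "{T \<in> TT_miss u. v \<in> T} \<subseteq> (\<lambda>z. insert z Y) ` (G - Y - {u, q})"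
  proof
    fix T assume T: "T \<in> {T \<in> TT_miss u. v \<in> T}"
    then obtain z where z: "z \<in> G - insert v U0" "T = insert z Y" using sub by blast
    have "T \<in> TT" using T by (simp add: TT_miss_def)
    moreover have "insert q Y = (U0 - {u}) \<union> {v, q}" by (auto simp: Y_def)
    ultimately have "z \<noteq> q" using z(2) notin_TT by auto
    then show "T \<in> (\<lambda>z. insert z Y) ` (G - Y - {u, q})" using z u by (auto simp: Y_def)
  qed
  then have "card {T \<in> TT_miss u. v \<in> T} \<le> card (G - Y - {u, q})"
    using fin by (meson card_image_le card_mono finite_Diff finite_imageI order_trans)
  moreover have "u \<in> G \<or> q \<in> G"
  proof (rule ccontr)
    assume "\<not> (u \<in> G \<or> q \<in> G)"
    then have "G \<inter> ((U0 - {u'}) \<union> {v, q}) \<subseteq> G \<inter> Y" by (auto simp: Y_def)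
    then show False using not_covering_if_subset[OF in_TT G(1), of "G \<inter> Y"] G(2) t_ge_1 fin by simp
  qed
  then have "card (G - Y - {u, q}) < card (G - Y)"
    using fin u v q by (intro psubset_card_mono) (auto simp: Y_def)
  moreover have "card (G - Y) = k - (t - 1)"
    using G card_F fin by (simp add: card_Diff_subset_Int)
  ultimately show ?thesis using t_ge_1 by linarith
next
  case True
  show ?thesis unfolding True by simp
qed

lemma card_U0_minus2: "u \<in> U0 \<Longrightarrow> v \<in> U0 \<Longrightarrow> u \<noteq> v \<Longrightarrow> card (U0 - {u, v}) = t - 1"
  using card_U0 finite_U0 by (subst card_Diff_subset) auto

text \<open>Two minimum covers that miss different points of U0 share only t - 1 points of U0,
  so the pairs they add outside U0 must meet.\<close>
lemma added_pairs_intersect: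
  assumes "u \<in> U0" "u' \<in> U0" "u \<noteq> u'"
    and "(U0 - {u}) \<union> e \<in> TT" "(U0 - {u'}) \<union> f \<in> TT" "e \<inter> U0 = {}" "f \<inter> U0 = {}"
  shows "e \<inter> f \<noteq> {}"
proof
  assume "e \<inter> f = {}"
  then have "((U0 - {u}) \<union> e) \<inter> ((U0 - {u'}) \<union> f) \<subseteq> U0 - {u, u'}" using assms(6,7) by auto
  from not_intersecting_if_subset[OF assms(4,5) this] show False
    using card_U0_minus2[OF assms(1-3)] t_ge_1 finite_U0
    by simp
qed

lemma TT_miss_meets:
  assumes "u \<in> U0" "T \<in> TT_miss u" "u' \<in> U0" "u \<noteq> u'" "(U0 - {u'}) \<union> f \<in> TT" "f \<inter> U0 = {}"
  shows "(T - U0) \<inter> f \<noteq> {}"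
proof (rule added_pairs_intersect[OF assms(1,3,4) _ assms(5) _ assms(6)])
  show "(U0 - {u}) \<union> (T - U0) \<in> TT" using assms(2) TT_miss_eq[OF assms(2)] by (simp add: TT_miss_def)
qed auto

definition edges :: "nat \<Rightarrow> nat set set" where
  "edges u = (\<lambda>T. T - U0) ` TT_miss u"

lemma card_edges: "card (edges u) = card (TT_miss u)"
  unfolding edges_def by (rule card_image, rule inj_onI) (metis TT_miss_eq)

lemma finite_edges: "finite (edges u)"
  using finite_TT_miss by (simp add: edges_def)

lemma edges_memD:
  assumes "u \<in> U0" "e \<in> edges u"
  shows "card e = 2" "e \<inter> U0 = {}" "(U0 - {u}) \<union> e \<in> TT"
proof -
  obtain T where T: "T \<in> TT_miss u" "e = T - U0" using assms(2) by (auto simp: edges_def)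
  show "card e = 2" using card_TT_miss_diff[OF assms(1) T(1)] T(2) by simp
  show "e \<inter> U0 = {}" using T(2) by blast
  show "(U0 - {u}) \<union> e \<in> TT" using TT_miss_eq[OF T(1)] T by (simp add: TT_miss_def)
qed

lemma mem_edgesI: "e \<inter> U0 = {} \<Longrightarrow> (U0 - {u}) \<union> e \<in> TT \<Longrightarrow> e \<in> edges u"
  unfolding edges_def TT_miss_def by (rule image_eqI[of _ _ "(U0 - {u}) \<union> e"]) auto

lemma card_edges_at_le_card: "card (edges_at (edges u) v) \<le> card {T \<in> TT_miss u. v \<in> T}"
proof -
  have "edges_at (edges u) v \<subseteq> (\<lambda>T. T - U0) ` {T \<in> TT_miss u. v \<in> T}"
    by (auto simp: edges_at_def edges_def)
  moreover have "finite {T \<in> TT_miss u. v \<in> T}" using finite_TT_miss[of u] by simp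
  ultimately show ?thesis by (meson card_image_le card_mono finite_imageI order_trans)
qed

lemma card_edges_at:
  assumes "u \<in> U0"
  shows "card (edges_at (edges u) v) \<le> k - t + 1"
proof (cases "v \<in> U0")
  case True
  then have "edges_at (edges u) v = {}" using edges_memD(2)[OF assms] by (auto simp: edges_at_def)
  then show ?thesis by simp
next
  case False
  then show ?thesis using card_edges_at_le_card[of u v] card_TT_miss_at[OF assms False] by linarith
qed

lemma card_edges_at_private:
  assumes u: "u \<in> U0" and u': "u' \<in> U0" "u' \<noteq> u" and f: "f \<in> edges u' - edges u" and p: "p \<in> f"
  shows "card (edges_at (edges u) p) < k - t + 1"
proof -
  have f': "f \<in> edges u'" using f by blast
  obtain q where q: "q \<noteq> p" "f = {p, q}" by (rule card_2_obtain_other[OF edges_memD(1)[OF u'(1) f'] p])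
  have pq: "p \<notin> U0" "q \<notin> U0" using edges_memD(2)[OF u'(1) f'] q by auto
  have "(U0 - {u'}) \<union> {p, q} \<in> TT" using edges_memD(3)[OF u'(1) f'] q by simp
  moreover have "(U0 - {u}) \<union> {p, q} \<notin> TT" using mem_edgesI[of "{p, q}" u] pq f q(2) by blast
  ultimately have "card {T \<in> TT_miss u. p \<in> T} \<le> k - t"
    by (rule card_TT_miss_at_if_missing[OF u u' pq(1) pq(2) q(1)])
  then show ?thesis using card_edges_at_le_card[of u p] by linarith
qed

lemma card_TT_miss_pair:
  assumes u: "u \<in> U0" and u': "u' \<in> U0" "u \<noteq> u'" and "TT_miss u \<noteq> {}" "TT_miss u' \<noteq> {}"
  shows "card (TT_miss u) + card (TT_miss u') \<le> 2 * (k - t + 1)"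
proof -
  have "card (edges u) + card (edges u') \<le> 2 * (k - t + 1)"
  proof (rule card_cross_intersecting_graphs[OF finite_edges finite_edges])
    show "edges u \<noteq> {}" "edges u' \<noteq> {}" using assms(4,5) by (auto simp: edges_def)
    show "\<forall>e\<in>edges u. card e = 2" "\<forall>e\<in>edges u'. card e = 2" using edges_memD(1) u u' by blast+
    show "\<forall>e\<in>edges u. \<forall>f\<in>edges u'. e \<inter> f \<noteq> {}"
      using added_pairs_intersect[OF u u'] edges_memD(2,3) u u' by blast
    show "\<forall>v. card (edges_at (edges u) v) \<le> k - t + 1" "\<forall>v. card (edges_at (edges u') v) \<le> k - t + 1"
      using card_edges_at u u' by blast+
    show "\<forall>f\<in>edges u' - edges u. \<forall>p\<in>f. card (edges_at (edges u) p) < k - t + 1"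
      "\<forall>e\<in>edges u - edges u'. \<forall>p\<in>e. card (edges_at (edges u') p) < k - t + 1"
      using card_edges_at_private u u' by metis+
    show "4 \<le> k - t + 1" using k_ge by simp
  qed
  then show ?thesis by (simp add: card_edges)
qed

end

section \<open>Counting the classes of minimum covers\<close>

locale cover_setting_T1 = cover_setting +
  fixes a b x1 :: nat
  assumes U0_diff_F0: "U0 - F0 = {a, b}" and a_ne_b: "a \<noteq> b"
    and x1_in_F0: "x1 \<in> F0" and x1_notin_U0: "x1 \<notin> U0"
    and T1_eq: "T1 = insert a (insert x1 (insert y1 W))"
begin

lemma a_b_mem: "a \<in> U0" "b \<in> U0" "a \<notin> F0" "b \<notin> F0"
  using U0_diff_F0 by auto

lemma U0_minus_b: "U0 - {b} = insert a W"
  using U0_diff_F0 a_ne_b by auto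

lemma T1_in_TT_miss_b: "T1 = (U0 - {b}) \<union> {x1, y1}" "T1 \<in> TT_miss b"
proof -
  show T1: "T1 = (U0 - {b}) \<union> {x1, y1}" using T1_eq U0_minus_b by auto
  have "U0 \<inter> T1 = U0 - {b}" using x1_notin_U0 y1_notin by (subst T1) auto
  then show "T1 \<in> TT_miss b" using T1_in by (simp add: TT_miss_def)
qed

lemma t_ge_2_if_W: "w \<in> W \<Longrightarrow> 2 \<le> t"
  using card_gt_0_iff[of "W"] card_W finite_U0 by auto

lemma card_insert_W_minus: "w \<in> W \<Longrightarrow> card (insert q (W - {w})) < t"
proof -
  assume w: "w \<in> W"
  have "card (W - {w}) = t - 2" using w card_W finite_U0 by (simp add: card_Diff_singleton)
  moreover have "card (insert q (W - {w})) \<le> card (W - {w}) + 1"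
    using finite_U0 by (simp add: card_insert_if)
  ultimately show ?thesis using t_ge_2_if_W[OF w] by linarith
qed

text \<open>A minimum cover missing a point w of W must take both new points in F0 to
  cover F0, and one of them must be x1 to meet T1 in t points.\<close>
lemma TT_miss_W_shape:
  assumes w: "w \<in> W" and T: "T \<in> TT_miss w"
  obtains z where "z \<in> F0 - U0" "z \<noteq> x1" "T = insert x1 (insert z (U0 - {w}))"
proof -
  have TT: "T \<in> TT" using T by (simp add: TT_miss_def)
  have card2: "card (T - U0) = 2" using card_TT_miss_diff[OF _ T] w by blast
  have F0: "T - U0 \<subseteq> F0"
  proof
    fix r assume r: "r \<in> T - U0"
    obtain s where s: "T - U0 = {r, s}" using card_2_obtain_other[OF card2 r] by blast
    show "r \<in> F0"
    proof (rule ccontr)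
      assume "r \<notin> F0"
      then have "F0 \<inter> T \<subseteq> insert s (W - {w})" using TT_miss_eq[OF T] s by auto
      from not_covering_if_subset[OF TT F0_in this] show False
        using card_insert_W_minus[OF w] finite_U0 by simp
    qed
  qed
  have "x1 \<in> T"
  proof (rule ccontr)
    assume "x1 \<notin> T"
    moreover have "y1 \<notin> T" using F0 y1_notin by auto
    moreover have "w \<notin> T" using T w by (auto simp: TT_miss_def)
    ultimately have "T \<inter> T1 \<subseteq> insert a (W - {w})" using T1_eq by auto
    from not_intersecting_if_subset[OF TT T1_in this] show False
      using card_insert_W_minus[OF w] finite_U0 by simp
  qed
  then obtain z where "z \<noteq> x1" "T - U0 = {x1, z}"
    using card_2_obtain_other[OF card2] x1_notin_U0 by blast
  then show ?thesis using that F0 TT_miss_eq[OF T] by auto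
qed

definition Z :: "nat set" where
  "Z = {z \<in> F0 - U0 - {x1}. \<exists>w\<in>W. insert x1 (insert z (U0 - {w})) \<in> TT}"

lemma card_TT_miss_W_le_card_Z:
  assumes w: "w \<in> W"
  shows "card (TT_miss w) \<le> card Z"
proof -
  have "TT_miss w \<subseteq> (\<lambda>z. insert x1 (insert z (U0 - {w}))) ` Z"
  proof
    fix T assume T: "T \<in> TT_miss w"
    then obtain z where z: "z \<in> F0 - U0" "z \<noteq> x1" "T = insert x1 (insert z (U0 - {w}))"
      using TT_miss_W_shape[OF w] by blast
    then have "z \<in> Z" using w T by (auto simp: Z_def TT_miss_def)
    then show "T \<in> (\<lambda>z. insert x1 (insert z (U0 - {w}))) ` Z" using z(3) by blast
  qed
  moreover have "finite Z" using finite_F0 by (simp add: Z_def)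
  ultimately show ?thesis by (meson card_image_le card_mono finite_imageI order_trans)
qed

lemma card_Z: "card Z \<le> k - t"
proof -
  have "card Z \<le> card (F0 - U0 - {x1})" using finite_F0 by (intro card_mono) (auto simp: Z_def)
  also have "\<dots> = k - t" using card_F0_diff_U0 x1_in_F0 x1_notin_U0 by simp
  finally show ?thesis .
qed

lemma TT_subset_classes: "TT \<subseteq> TT_sup \<union> (\<Union>w\<in>W. TT_miss w) \<union> TT_miss b \<union> TT_miss a"
proof
  fix T assume "T \<in> TT"
  moreover have "U0 = W \<union> {a, b}" using U0_diff_F0 by auto
  ultimately show "T \<in> TT_sup \<union> (\<Union>w\<in>W. TT_miss w) \<union> TT_miss b \<union> TT_miss a"
    using TT_cases by blast
qed

lemma card_TT_le_sum:
  "card TT \<le> card TT_sup + (\<Sum>w\<in>W. card (TT_miss w)) + card (TT_miss b) + card (TT_miss a)"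
proof -
  have "card TT \<le> card (TT_sup \<union> (\<Union>w\<in>W. TT_miss w) \<union> TT_miss b \<union> TT_miss a)"
    using TT_subset_classes finite_TT finite_TT_miss finite_U0
    by (intro card_mono) (simp_all add: TT_sup_def)
  also have "\<dots> \<le> card TT_sup + card (\<Union>w\<in>W. TT_miss w) + card (TT_miss b) + card (TT_miss a)"
    by (meson add_le_mono1 card_Un_le order_trans)
  also have "card (\<Union>w\<in>W. TT_miss w) \<le> (\<Sum>w\<in>W. card (TT_miss w))"
    by (rule card_UN_le) (simp add: finite_U0)
  finally show ?thesis by linarith
qed

text \<open>Since U0 - {b} is not a t-cover of TT, some minimum cover misses a point w of
  W; it adds x1 and some z0, and every pair added by a cover missing b meets {x1, z0}.\<close>
lemma card_TT_miss_b_if_a_empty: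
  assumes "TT_miss a = {}"
  shows "card (TT_miss b) \<le> 2 * (k - t + 1)"
proof -
  obtain T where T: "T \<in> TT" "card ((U0 - {b}) \<inter> T) < t"
    using TT_uncovered[of "U0 - {b}"] U0_sub card_U0_minus a_b_mem by blast
  have "U0 - {b} \<subseteq> T" if "T \<in> TT_sup \<union> TT_miss b"
    using that by (auto simp: TT_sup_def TT_miss_def)
  then have "T \<notin> TT_sup \<union> TT_miss b"
    using T(2) card_U0_minus[OF a_b_mem(2)] by (metis Int_absorb2 less_irrefl)
  then obtain w where w: "w \<in> W" "T \<in> TT_miss w"
    using T(1) TT_subset_classes assms by blast
  then obtain z0 where z0: "z0 \<in> F0 - U0" "T = (U0 - {w}) \<union> {x1, z0}"
    using TT_miss_W_shape by (metis Un_insert_right insert_is_Un sup_commute)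
  have "w \<noteq> b" using w a_b_mem by auto
  have "edges b \<subseteq> edges_at (edges b) x1 \<union> edges_at (edges b) z0"
  proof
    fix e assume e: "e \<in> edges b"
    have "{x1, z0} \<inter> U0 = {}" using z0 x1_notin_U0 by auto
    then have "e \<inter> {x1, z0} \<noteq> {}"
      using added_pairs_intersect[OF a_b_mem(2) _ \<open>w \<noteq> b\<close>[symmetric]] edges_memD[OF a_b_mem(2) e]
        w z0 T(1) by blast
    then show "e \<in> edges_at (edges b) x1 \<union> edges_at (edges b) z0" using e by (auto simp: edges_at_def)
  qed
  then have "card (edges b) \<le> card (edges_at (edges b) x1) + card (edges_at (edges b) z0)"
    by (meson card_Un_le card_mono finite_UnI finite_edges finite_edges_at order_trans)
  then show ?thesis
    using card_edges_at[OF a_b_mem(2), of x1] card_edges_at[OF a_b_mem(2), of z0] card_edges[of b]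
    by simp
qed

lemma card_TT_miss_a_b: "card (TT_miss b) + card (TT_miss a) \<le> 2 * (k - t + 1)"
proof (cases "TT_miss a = {}")
  case True
  then show ?thesis using card_TT_miss_b_if_a_empty by simp
next
  case False
  moreover have "TT_miss b \<noteq> {}" using T1_in_TT_miss_b by blast
  ultimately show ?thesis using card_TT_miss_pair a_b_mem a_ne_b by simp
qed

lemma card_TT_if_card_Z_le_1:
  assumes "card Z \<le> 1"
  shows "card TT \<le> 3 * (k - t) + t + 2"
proof -
  have "(\<Sum>w\<in>W. card (TT_miss w)) \<le> (\<Sum>w\<in>W. 1)"
    using card_TT_miss_W_le_card_Z assms by (intro sum_mono) (meson order_trans)
  then have "(\<Sum>w\<in>W. card (TT_miss w)) \<le> t - 1" using card_W by simp
  then show ?thesis using card_TT_le_sum card_TT_sup card_TT_miss_a_b t_ge_1 k_ge by simp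
qed

end

text \<open>Every member of TT is K = U0 \<union> {x1} itself or K with one point v replaced by a point
  outside K. If b \<notin> G, the classes with v \<in> G are empty; if b \<in> G, their new point lies
  in G.\<close>

locale x1_forced = cover_setting_T1 +
  fixes G :: "nat set"
  assumes x1_in_TT_miss_b: "T \<in> TT_miss b \<Longrightarrow> x1 \<in> T"
    and x1_in_TT_miss_a: "T \<in> TT_miss a \<Longrightarrow> x1 \<in> T"
    and t_ge_2: "2 \<le> t"
    and G_in_F: "G \<in> F" and card_G_Int: "card (G \<inter> insert x1 (U0 - {b})) = t - 1"
begin

abbreviation K :: "nat set" where
  "K \<equiv> insert x1 U0"

lemma finite_G: "finite G"
  using finite_F_mem[OF G_in_F] .

lemma finite_K: "finite K"
  using finite_U0 by simp

lemma K_minus_b: "K - {b} = insert x1 (U0 - {b})"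
  using x1_notin_U0 a_b_mem(2) by auto

lemma y1_in_G: "y1 \<in> G"
proof (rule mem_if_subset_insert[OF T1_in G_in_F])
  show "T1 \<subseteq> insert y1 (K - {b})" using T1_in_TT_miss_b(1) K_minus_b by auto
  show "finite (K - {b})" using finite_K by simp
  show "card (G \<inter> (K - {b})) < t" using card_G_Int K_minus_b t_ge_2 by simp
qed

lemma card_G_Int_decompose:
  "t - 1 = of_bool (x1 \<in> G) + of_bool (a \<in> G) + card (W \<inter> G)"
proof -
  have "insert x1 (U0 - {b}) = insert x1 (insert a W)" using U0_minus_b by simp
  moreover have "card (G \<inter> insert x1 (insert a W)) = of_bool (x1 \<in> G) + card (G \<inter> insert a W)"
    using finite_U0 x1_notin_U0 a_b_mem by (intro card_Int_insert_of_bool) auto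
  moreover have "card (G \<inter> insert a W) = of_bool (a \<in> G) + card (G \<inter> W)"
    using finite_U0 a_b_mem by (intro card_Int_insert_of_bool) auto
  ultimately have "card (G \<inter> insert x1 (U0 - {b})) = of_bool (x1 \<in> G) + of_bool (a \<in> G) + card (G \<inter> W)"
    by simp
  then show ?thesis using card_G_Int by (simp add: Int_commute)
qed

lemma TT_sup_shape_K: "T \<in> TT_sup \<Longrightarrow> \<exists>z\<in>F0 - U0. T = insert z (K - {x1})"
  using TT_sup_shape x1_notin_U0 by (metis Diff_insert_absorb)

lemma TT_miss_W_shape_K: "w \<in> W \<Longrightarrow> T \<in> TT_miss w \<Longrightarrow> \<exists>z\<in>F0 - K. T = insert z (K - {w})"
proof -
  assume w: "w \<in> W" and T: "T \<in> TT_miss w"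
  then obtain z where z: "z \<in> F0 - U0" "z \<noteq> x1" "T = insert x1 (insert z (U0 - {w}))"
    using TT_miss_W_shape by blast
  then have "T = insert z (K - {w})" using w x1_notin_U0 by auto
  moreover have "z \<in> F0 - K" using z by simp
  ultimately show ?thesis by blast
qed

lemma TT_miss_ab_shape_K: "u \<in> {a, b} \<Longrightarrow> T \<in> TT_miss u \<Longrightarrow> \<exists>z\<in>-K. T = insert z (K - {u})"
  using TT_miss_shape_insert[of u T x1] a_b_mem x1_in_TT_miss_a x1_in_TT_miss_b x1_notin_U0
  by (metis ComplI insertE singletonD)

text \<open>G meets K - {v} in t - 2 points, too few for a cover inside insert z (K - {v}).\<close>
lemma class_empty_if_b_notin_G:
  assumes "b \<notin> G" "v \<in> G \<inter> K" "C \<subseteq> TT" "\<And>T. T \<in> C \<Longrightarrow> \<exists>z. T = insert z (K - {v})"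
  shows "C = {}"
proof (rule ccontr)
  assume "C \<noteq> {}"
  then obtain T z where T: "T \<in> TT" "T = insert z (K - {v})" using assms(3,4) by blast
  have "G \<inter> (K - {v}) = G \<inter> (K - {b}) - {v}" "v \<in> G \<inter> (K - {b})" using assms(1,2) by auto
  then have "card (G \<inter> (K - {v})) = t - 2"
    using card_G_Int K_minus_b finite_K by (simp add: card_Diff_singleton)
  moreover have "t \<le> card (G \<inter> (K - {v})) + 1"
    using card_Int_ge_if_subset_insert[OF T(1) G_in_F _ ] T(2) finite_K by blast
  ultimately show False using t_ge_2 by linarith
qed

lemma card_G_Int_K_if_b_in_G: "b \<in> G \<Longrightarrow> card (G \<inter> K) = t"
proof -
  assume "b \<in> G"
  then have "G \<inter> K = insert b (G \<inter> (K - {b}))" using a_b_mem by auto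
  moreover have "card (insert b (G \<inter> (K - {b}))) = card (G \<inter> (K - {b})) + 1"
    using finite_K by (simp add: card_insert_if)
  ultimately show ?thesis using card_G_Int K_minus_b t_ge_2 by simp
qed

text \<open>G meets K - {v} in t - 1 points, so a cover inside insert z (K - {v}) needs z \<in> G.\<close>
lemma card_class_if_b_in_G:
  assumes "b \<in> G" "v \<in> G \<inter> K" "C \<subseteq> TT" "\<And>T. T \<in> C \<Longrightarrow> \<exists>z\<in>D. T = insert z (K - {v})"
  shows "card C \<le> card (G \<inter> D)"
proof -
  have "card (G \<inter> (K - {v})) < t"
    using card_G_Int_K_if_b_in_G[OF assms(1)] assms(2) finite_K t_ge_2
    by (simp add: Int_Diff[symmetric] card_Diff_singleton)
  then have "C \<subseteq> (\<lambda>z. insert z (K - {v})) ` (G \<inter> D)"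
    using assms(3,4) mem_if_subset_insert[OF _ G_in_F _ _] finite_K by blast
  then show ?thesis using finite_G by (meson card_image_le card_mono finite_Int finite_imageI order_trans)
qed

lemma card_TT_miss_x1:
  assumes "u \<in> {a, b}"
  shows "card (TT_miss u) \<le> k - t + 1"
proof -
  have "TT_miss u = {T \<in> TT_miss u. x1 \<in> T}" using assms x1_in_TT_miss_a x1_in_TT_miss_b by auto
  then show ?thesis using card_TT_miss_at[of u x1] assms a_b_mem x1_notin_U0 by auto
qed

lemma card_TT_miss_W: "w \<in> W \<Longrightarrow> card (TT_miss w) \<le> k - t"
  using card_TT_miss_W_le_card_Z card_Z by (meson order_trans)

lemma TT_miss_shape_K:
  "u \<in> insert a W \<Longrightarrow> T \<in> TT_miss u \<Longrightarrow> \<exists>z. T = insert z (K - {u})"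
  using TT_miss_W_shape_K TT_miss_ab_shape_K by blast

lemma card_TT_sup_if_b_notin_G: "b \<notin> G \<Longrightarrow> card TT_sup \<le> (k - t + 1) * of_bool (x1 \<notin> G)"
proof (cases "x1 \<in> G")
  case True
  assume "b \<notin> G"
  then have "TT_sup = {}"
    using class_empty_if_b_notin_G[OF _ _ TT_sup_subset] TT_sup_shape_K True by blast
  then show ?thesis by simp
qed (use card_TT_sup in simp)

lemma card_TT_miss_if_b_notin_G:
  assumes "b \<notin> G" and u: "u \<in> insert a W"
  shows "card (TT_miss u) \<le> (k - t + 1) * of_bool (u \<notin> G)"
proof (cases "u \<in> G")
  case True
  then have "u \<in> G \<inter> K" using u a_b_mem by auto
  then have "TT_miss u = {}"
    using class_empty_if_b_notin_G[OF assms(1) _ TT_miss_subset] TT_miss_shape_K[OF u] by blast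
  then show ?thesis by simp
next
  case False
  have "card (TT_miss u) \<le> k - t + 1"
    using u card_TT_miss_W[of u] card_TT_miss_x1[of a] by (cases "u = a") auto
  then show ?thesis using False by simp
qed

lemma card_TT_if_b_notin_G:
  assumes "b \<notin> G"
  shows "card TT \<le> 3 * (k - t) + 3"
proof -
  define m where "m = k - t + 1"
  have "(\<Sum>w\<in>W. card (TT_miss w)) \<le> (\<Sum>w\<in>W. m * of_bool (w \<notin> G))"
    using card_TT_miss_if_b_notin_G[OF assms] by (intro sum_mono) (simp add: m_def)
  also have "\<dots> = m * card (W - G)"
    using finite_U0 by (simp add: sum_distrib_left[symmetric] set_diff_eq Int_def)
  finally have "card TT \<le> m * (of_bool (x1 \<notin> G) + card (W - G) + of_bool (a \<notin> G)) + m"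
    using card_TT_le_sum card_TT_sup_if_b_notin_G[OF assms] card_TT_miss_if_b_notin_G[OF assms, of a]
      card_TT_miss_x1[of b] by (simp add: m_def algebra_simps)
  moreover have "card (W - G) = t - 1 - card (W \<inter> G)"
    using card_W finite_U0 by (simp add: card_Diff_subset_Int)
  then have "of_bool (x1 \<notin> G) + card (W - G) + of_bool (a \<notin> G) = (2::nat)"
    using card_G_Int_decompose by (cases "x1 \<in> G"; cases "a \<in> G") simp_all
  ultimately show ?thesis by (simp add: m_def)
qed

lemma card_G_diff_K: "b \<in> G \<Longrightarrow> card (G - K) = k - t"
  using card_G_Int_K_if_b_in_G card_F[OF G_in_F] finite_G by (simp add: card_Diff_subset_Int)

lemma card_G_Int_F0_diff_K: "b \<in> G \<Longrightarrow> card (G \<inter> (F0 - K)) \<le> k - t - 1"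
proof -
  assume b: "b \<in> G"
  have "y1 \<in> G - K" using y1_in_G y1_notin x1_in_F0 by auto
  then have "card (G - K - {y1}) = k - t - 1" using card_G_diff_K[OF b] by (simp add: card_Diff_singleton)
  moreover have "G \<inter> (F0 - K) \<subseteq> G - K - {y1}" using y1_notin by auto
  ultimately show ?thesis using finite_G by (metis card_mono finite_Diff)
qed

lemma card_TT_sup_if_b_in_G: "b \<in> G \<Longrightarrow> card TT_sup + of_bool (x1 \<in> G) \<le> k - t + 1"
proof (cases "x1 \<in> G")
  case True
  assume b: "b \<in> G"
  have "card TT_sup \<le> card (G \<inter> (F0 - U0))"
    using card_class_if_b_in_G[OF b _ TT_sup_subset] True TT_sup_shape_K by blast
  also have "\<dots> \<le> card (insert x1 (G \<inter> (F0 - K)))" using finite_G by (intro card_mono) auto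
  also have "\<dots> \<le> card (G \<inter> (F0 - K)) + 1" using finite_G by (simp add: card_insert_if)
  finally show ?thesis using True card_G_Int_F0_diff_K[OF b] k_ge by simp
qed (use card_TT_sup in simp)

lemma card_TT_miss_W_if_b_in_G:
  "b \<in> G \<Longrightarrow> w \<in> W \<Longrightarrow> card (TT_miss w) + of_bool (w \<in> G) \<le> k - t"
proof (cases "w \<in> G")
  case True
  assume b: "b \<in> G" and w: "w \<in> W"
  have "card (TT_miss w) \<le> card (G \<inter> (F0 - K))"
    using card_class_if_b_in_G[OF b _ TT_miss_subset] True w TT_miss_W_shape_K by blast
  then show ?thesis using True card_G_Int_F0_diff_K[OF b] k_ge by simp
qed (use card_TT_miss_W in simp)

lemma card_TT_miss_ab_if_b_in_G:
  assumes b: "b \<in> G" and u: "u \<in> {a, b}" and "u \<in> G"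
  shows "card (TT_miss u) \<le> k - t"
proof -
  have "card (TT_miss u) \<le> card (G \<inter> - K)"
    using card_class_if_b_in_G[OF b _ TT_miss_subset] assms a_b_mem TT_miss_ab_shape_K by blast
  then show ?thesis using card_G_diff_K[OF b] by (simp add: Diff_eq)
qed

lemma card_TT_if_b_in_G:
  assumes b: "b \<in> G"
  shows "card TT + t \<le> (t + 2) * (k - t) + 3"
proof -
  have "(\<Sum>w\<in>W. card (TT_miss w) + of_bool (w \<in> G)) \<le> (\<Sum>w\<in>W. k - t)"
    using card_TT_miss_W_if_b_in_G[OF b] by (intro sum_mono) simp
  then have "(\<Sum>w\<in>W. card (TT_miss w)) + card (W \<inter> G) \<le> (t - 1) * (k - t)"
    using finite_U0 card_W by (simp add: sum.distrib Int_def)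
  moreover have "card (TT_miss a) + of_bool (a \<in> G) \<le> k - t + 1"
    using card_TT_miss_ab_if_b_in_G[OF b, of a] card_TT_miss_x1[of a] by (cases "a \<in> G") auto
  moreover have "(t + 2) * (k - t) = (t - 1) * (k - t) + 3 * (k - t)"
    using t_ge_2 add_mult_distrib[of "t - 1" 3 "k - t"] by simp
  moreover have "card (TT_miss b) \<le> k - t" using card_TT_miss_ab_if_b_in_G[OF b] b by simp
  ultimately show ?thesis
    using card_TT_le_sum card_TT_sup_if_b_in_G[OF b] card_G_Int_decompose t_ge_2 by linarith
qed

end

locale two_Z_witnesses = cover_setting_T1 +
  fixes z1 z2 w1 w2 :: nat
  assumes z1_ne_z2: "z1 \<noteq> z2"
    and z_mem: "z1 \<in> F0 - U0" "z2 \<in> F0 - U0" "z1 \<noteq> x1" "z2 \<noteq> x1"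
    and w_mem: "w1 \<in> W" "w2 \<in> W"
    and z1_cover: "(U0 - {w1}) \<union> {x1, z1} \<in> TT" and z2_cover: "(U0 - {w2}) \<union> {x1, z2} \<in> TT"
begin

lemma t_ge_2: "2 \<le> t"
  using t_ge_2_if_W[OF w_mem(1)] .

lemma TT_miss_meets_z:
  assumes "u \<in> {a, b}" "T \<in> TT_miss u"
  shows "x1 \<in> T \<or> {z1, z2} \<subseteq> T"
proof -
  have u: "u \<in> U0" "u \<noteq> w1" "u \<noteq> w2" using assms(1) a_b_mem w_mem by auto
  have disj: "{x1, z1} \<inter> U0 = {}" "{x1, z2} \<inter> U0 = {}" using z_mem x1_notin_U0 by auto
  have "(T - U0) \<inter> {x1, z1} \<noteq> {}"
    using TT_miss_meets[OF u(1) assms(2) _ u(2) z1_cover disj(1)] w_mem(1) by blast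
  moreover have "(T - U0) \<inter> {x1, z2} \<noteq> {}"
    using TT_miss_meets[OF u(1) assms(2) _ u(3) z2_cover disj(2)] w_mem(2) by blast
  ultimately show ?thesis by auto
qed

lemma TT_miss_b_cases: "T \<in> TT_miss b \<Longrightarrow> x1 \<in> T \<or> T = (U0 - {b}) \<union> {z1, z2}"
proof -
  assume T: "T \<in> TT_miss b"
  have "x1 \<in> T \<or> T - U0 = {z1, z2}"
    using TT_miss_meets_z[OF _ T] card_2_eqI[OF card_TT_miss_diff[OF a_b_mem(2) T]] z_mem z1_ne_z2 by auto
  then show ?thesis using TT_miss_eq[OF T] by auto
qed

text \<open>A cover missing a also meets T1 = (U0 - {b}) \<union> {x1, y1} in its added pair, and
  z1, z2, y1 are three distinct points.\<close>
lemma x1_in_TT_miss_a: "T \<in> TT_miss a \<Longrightarrow> x1 \<in> T"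
proof (rule ccontr)
  assume T: "T \<in> TT_miss a" and "x1 \<notin> T"
  then have "{z1, z2} \<subseteq> T - U0" using TT_miss_meets_z[OF _ T] z_mem by auto
  moreover have "(T - U0) \<inter> {x1, y1} \<noteq> {}"
  proof (rule TT_miss_meets[OF a_b_mem(1) T a_b_mem(2) a_ne_b])
    show "(U0 - {b}) \<union> {x1, y1} \<in> TT" using T1_in_TT_miss_b(1) T1_in by simp
    show "{x1, y1} \<inter> U0 = {}" using x1_notin_U0 y1_notin by auto
  qed
  ultimately have "{z1, z2, y1} \<subseteq> T - U0" using \<open>x1 \<notin> T\<close> by auto
  moreover have "z1 \<noteq> y1" "z2 \<noteq> y1" using z_mem y1_notin by auto
  then have "card {z1, z2, y1} = 3" using z1_ne_z2 by simp
  moreover have "finite (T - U0)" using T finite_TT_mem by (simp add: TT_miss_def)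
  ultimately have "3 \<le> card (T - U0)" by (metis card_mono)
  then show False using card_TT_miss_diff[OF a_b_mem(1) T] by simp
qed

lemma card_TT_miss_x1_if_pair_in:
  assumes pair: "(U0 - {b}) \<union> {z1, z2} \<in> TT" and u: "u \<in> U0" "u \<noteq> b"
  shows "card {T \<in> TT_miss u. x1 \<in> T} \<le> 2"
proof -
  have "{T \<in> TT_miss u. x1 \<in> T} \<subseteq> (\<lambda>z. insert z (insert x1 (U0 - {u}))) ` {z1, z2}"
  proof
    fix T assume "T \<in> {T \<in> TT_miss u. x1 \<in> T}"
    then have T: "T \<in> TT_miss u" "x1 \<in> T" by auto
    obtain z where z: "z \<notin> U0" "z \<noteq> x1" "T = insert z (insert x1 (U0 - {u}))"
      using TT_miss_shape[OF u(1) T x1_notin_U0] by blast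
    have "{z1, z2} \<inter> U0 = {}" using z_mem by auto
    then have "(T - U0) \<inter> {z1, z2} \<noteq> {}" using TT_miss_meets[OF u(1) T(1) a_b_mem(2) u(2) pair] by blast
    moreover have "T - U0 = {x1, z}" using z x1_notin_U0 by auto
    ultimately have "z \<in> {z1, z2}" using z_mem by auto
    then show "T \<in> (\<lambda>z. insert z (insert x1 (U0 - {u}))) ` {z1, z2}" using z(3) by blast
  qed
  then have "card {T \<in> TT_miss u. x1 \<in> T} \<le> card {z1, z2}"
    by (meson card_image_le card_mono finite.emptyI finite.insertI finite_imageI order_trans)
  then show ?thesis using z1_ne_z2 by simp
qed

lemma card_TT_if_pair_in:
  assumes pair: "(U0 - {b}) \<union> {z1, z2} \<in> TT"
  shows "card TT \<le> 2 * (k - t) + 2 * t + 3"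
proof -
  have "TT_miss a = {T \<in> TT_miss a. x1 \<in> T}" using x1_in_TT_miss_a by auto
  then have a: "card (TT_miss a) \<le> 2"
    using card_TT_miss_x1_if_pair_in[OF pair a_b_mem(1) a_ne_b] by simp
  have "card (TT_miss w) \<le> 2" if w: "w \<in> W" for w
  proof -
    have "TT_miss w = {T \<in> TT_miss w. x1 \<in> T}" using TT_miss_W_shape[OF w] by blast
    moreover have "w \<noteq> b" using w a_b_mem by auto
    ultimately show ?thesis using card_TT_miss_x1_if_pair_in[OF pair _ \<open>w \<noteq> b\<close>] w by simp
  qed
  then have W: "(\<Sum>w\<in>W. card (TT_miss w)) \<le> 2 * (t - 1)"
    using sum_mono[of "W" "\<lambda>w. card (TT_miss w)" "\<lambda>_. 2"] card_W by simp
  have "TT_miss b \<subseteq> {T \<in> TT_miss b. x1 \<in> T} \<union> {(U0 - {b}) \<union> {z1, z2}}"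
    using TT_miss_b_cases by blast
  then have "card (TT_miss b) \<le> card ({T \<in> TT_miss b. x1 \<in> T} \<union> {(U0 - {b}) \<union> {z1, z2}})"
    using finite_TT_miss[of b] by (intro card_mono) auto
  also have "\<dots> \<le> card {T \<in> TT_miss b. x1 \<in> T} + 1"
    using card_Un_le[of "{T \<in> TT_miss b. x1 \<in> T}" "{(U0 - {b}) \<union> {z1, z2}}"] by simp
  also have "\<dots> \<le> k - t + 2" using card_TT_miss_at[OF a_b_mem(2) x1_notin_U0] by simp
  finally show ?thesis using card_TT_le_sum card_TT_sup a W t_ge_2 k_ge by simp
qed

lemma card_TT_if_pair_notin:
  assumes "(U0 - {b}) \<union> {z1, z2} \<notin> TT"
  shows "card TT \<le> 3 * (k - t) + 3 \<or> card TT + t \<le> (t + 2) * (k - t) + 3"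
proof -
  let ?Y = "insert x1 (U0 - {b})"
  have "T1 = insert y1 ?Y" using T1_in_TT_miss_b(1) by auto
  moreover have "card ?Y = t + 1" using card_U0_minus[OF a_b_mem(2)] x1_notin_U0 finite_U0 by simp
  moreover have "?Y \<subseteq> {1..n}" using TT_sub[OF T1_in] calculation(1) by auto
  ultimately obtain G where "G \<in> F" "card (G \<inter> ?Y) = t - 1"
    using obtain_sparse_member T1_in by metis
  moreover have "x1 \<in> T" if "T \<in> TT_miss b" for T
    using TT_miss_b_cases[OF that] assms TT_miss_subset that by blast
  ultimately interpret x1_forced n k t F TT U0 F0 T1 y1 a b x1 G
    using x1_in_TT_miss_a t_ge_2 by unfold_locales auto
  show ?thesis using card_TT_if_b_notin_G card_TT_if_b_in_G by blast
qed

end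

context cover_setting_T1
begin

lemma card_TT_less_bound_T1:
  "card TT < max ((k - t) * (k - t + 1) + 1) (max ((t + 2) * (k - t) + 1) ((t + 4) choose 2))"
proof (cases "card Z \<le> 1")
  case True
  then have "card TT \<le> 3 * (k - t) + t + 2" by (rule card_TT_if_card_Z_le_1)
  then show ?thesis using k_ge t_ge_1 by (intro less_max_bound_if_case_bound) auto
next
  case False
  then have "2 \<le> card Z" by simp
  then obtain z1 z2 where z: "z1 \<in> Z" "z2 \<in> Z" "z1 \<noteq> z2" by (rule obtain_two_distinct)
  obtain w1 w2 where "w1 \<in> W" "insert x1 (insert z1 (U0 - {w1})) \<in> TT"
    and "w2 \<in> W" "insert x1 (insert z2 (U0 - {w2})) \<in> TT"
    using z unfolding Z_def by blast
  with z interpret two_Z_witnesses n k t F TT U0 F0 T1 y1 a b x1 z1 z2 w1 w2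
    by unfold_locales (auto simp: Z_def)
  have "card TT \<le> 2 * (k - t) + 2 * t + 3 \<or> card TT \<le> 3 * (k - t) + 3 \<or>
      card TT + t \<le> (t + 2) * (k - t) + 3"
    using card_TT_if_pair_in card_TT_if_pair_notin by blast
  then show ?thesis using k_ge t_ge_2 by (intro less_max_bound_if_case_bound) auto
qed

end

context cover_setting
begin

lemma card_TT_less_bound:
  "card TT < max ((k - t) * (k - t + 1) + 1) (max ((t + 2) * (k - t) + 1) ((t + 4) choose 2))"
proof -
  obtain a x1 where a: "a \<in> U0 - F0" and x1: "x1 \<in> F0 - U0"
    and T1: "T1 = insert a (insert x1 (insert y1 W))"
    by (rule T1_shape)
  obtain b where "U0 - F0 = {a, b}" "a \<noteq> b"
    using card_2_obtain_other[OF card_U0_diff_F0 a] by blast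
  with x1 T1 interpret cover_setting_T1 n k t F TT U0 F0 T1 y1 a b x1
    by unfold_locales auto
  show ?thesis by (rule card_TT_less_bound_T1)
qed

end

lemma cover_setting_Tcov:
  assumes "2 * k < n" and "t + 3 \<le> k" and max: "maximal_t_intersecting n k t F"
    and tau_F: "tau n t F = t + 2" and tau_T: "tau n t (Tcov n t F) = t + 1"
    and U0: "U0 \<in> Ucov n t F" and "F0 \<in> F" and "card (U0 \<inter> F0) + 1 = t"
    and "T1 \<in> Tcov n t F" "y1 \<in> T1" "y1 \<notin> U0" "y1 \<notin> F0"
  shows "cover_setting n k t F (Tcov n t F) U0 F0 T1 y1"
proof
  show "G \<in> F \<Longrightarrow> card G = k" for G
    using max by (auto simp: maximal_t_intersecting_def k_subsets_def)
  show "T \<in> Tcov n t F \<Longrightarrow> T \<subseteq> {1..n}" for T by (simp add: Tcov_def is_tcover_def)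
  show "T \<in> Tcov n t F \<Longrightarrow> card T = t + 2" for T using tau_F by (simp add: Tcov_def)
  show "T \<in> Tcov n t F \<Longrightarrow> G \<in> F \<Longrightarrow> t \<le> card (G \<inter> T)" for T G
    by (simp add: Tcov_def is_tcover_def Int_commute)
  have "t_intersecting t (Tcov n t F)"
    using t_intersecting_Tcov[OF max] tau_F assms(1,2) by simp
  then show "T \<in> Tcov n t F \<Longrightarrow> T' \<in> Tcov n t F \<Longrightarrow> t \<le> card (T \<inter> T')" for T T'
    by (simp add: t_intersecting_def)
  show "Y \<subseteq> {1..n} \<Longrightarrow> card Y = t + 1 \<Longrightarrow> \<exists>G\<in>F. card (G \<inter> Y) < t" for Y
    using exists_uncovered_if_card_less_tau[of Y n t F] tau_F by (simp add: Int_commute)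
  show "X \<subseteq> {1..n} \<Longrightarrow> card X = t \<Longrightarrow> \<exists>T\<in>Tcov n t F. card (X \<inter> T) < t" for X
    using exists_uncovered_if_card_less_tau[of X n t "Tcov n t F"] tau_T by simp
  show "U0 \<subseteq> {1..n}" "card U0 = t + 1" "T \<in> Tcov n t F \<Longrightarrow> t \<le> card (U0 \<inter> T)" for T
    using U0 tau_T by (auto simp: Ucov_def Tcov_def is_tcover_def)
qed (use assms in simp_all)

theorem lemma2p7:
  fixes n k t :: nat and F :: "nat set set" and U0 F0 :: "nat set"
  assumes "n > 2 * k"
    and "k \<ge> t + 3"
    and "maximal_t_intersecting n k t F"
    and "tau n t F = t + 2"
    and "tau n t (Tcov n t F) = t + 1"
    and "U0 \<in> Ucov n t F"
    and "F0 \<in> F"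
    and "card (U0 \<inter> F0) + 1 = t"
    and "\<not> Tcov n t F \<subseteq> k_subsets (U0 \<union> F0) (t + 2)"
  shows "card (Tcov n t F) < max ((k - t) * (k - t + 1) + 1) (max ((t + 2) * (k - t) + 1) ((t + 4) choose 2))"
proof -
  obtain T1 where T1: "T1 \<in> Tcov n t F" "\<not> T1 \<subseteq> U0 \<union> F0"
    using assms(4,9) by (auto simp: k_subsets_def Tcov_def)
  then obtain y1 where "y1 \<in> T1" "y1 \<notin> U0" "y1 \<notin> F0" by blast
  with T1(1) assms(1-8) have "cover_setting n k t F (Tcov n t F) U0 F0 T1 y1"
    by (intro cover_setting_Tcov) simp_all
  then show ?thesis by (rule cover_setting.card_TT_less_bound)
qed

end
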